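(* Let $r,n\in\mathbb{N}$ with $$e\left(\tfrac{1}{2}\log(2n-1)+1\right)\leq r\leq n.$$ Then for any $s_1,\ldots,s_r\in\mathbb{N}$, $\overline{H}_n(s_1,\ldots,s_r)$ is not an integer.
   Context: $\mathbb{N}$ is the set of positive integers, $\log$ is the natural logarithm, and $\overline{H}_n(s_1,\ldots,s_r)=\sum_{0\leq k_1<\cdots<k_r\leq n-1}\prod_{j=1}^r (2k_j+1)^{-s_j}$. *)

theory Defs
  imports "HOL-Analysis.Analysis"
begin

definition odd_mhs :: "nat \<Rightarrow> nat list \<Rightarrow> real" where
  "odd_mhs n s =
     (\<Sum>ks \<in> {ks. length ks = length s \<and> sorted_wrt (<) ks \<and> (\<forall>k\<in>set ks. k < n)}.
        \<Prod>j<length s. 1 / (2 * real (ks ! j) + 1) ^ (s ! j))"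

end

theory Submission
  imports Defs
begin

text \<open>Since every s_j \<ge> 1, the sum is positive and bounded by the r-th elementary
  symmetric function e_r of the numbers a_k = 1/(2k+1), k < n. Each r-subset occurs r! times
  in the expansion of (\<Sum>a_k)^r, so r! e_r \<le> (\<Sum>a_k)^r; with \<Sum>a_k \<le> 1 + ln(2n-1)/2 \<le> r/e
  this gives e_r \<le> (r/e)^r / r!, which is < 1 because r^r / r! is a single term of the
  series of e^r. So the sum lies strictly between 0 and 1.\<close>

definition elem_sym :: "('a \<Rightarrow> 'b::comm_semiring_1) \<Rightarrow> nat \<Rightarrow> 'a set \<Rightarrow> 'b" where
  "elem_sym a k A = (\<Sum>S | S \<subseteq> A \<and> card S = k. prod a S)"

lemma elem_sym_0:
  assumes "finite A"
  shows "elem_sym a 0 A = 1"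
proof -
  have "{S. S \<subseteq> A \<and> card S = 0} = {{}}"
    using assms by (auto dest: finite_subset)
  then show ?thesis by (simp add: elem_sym_def)
qed

lemma elem_sym_empty_Suc: "elem_sym a (Suc k) {} = 0"
  unfolding elem_sym_def by (rule sum.neutral) auto

lemma elem_sym_insert_Suc:
  assumes "finite A" and "x \<notin> A"
  shows "elem_sym a (Suc k) (insert x A) = elem_sym a (Suc k) A + a x * elem_sym a k A"
proof -
  let ?subsets = "\<lambda>k. {S. S \<subseteq> A \<and> card S = k}"
  have fin: "finite (?subsets k)" for k
    using assms(1) by (auto intro: finite_subset[of _ "Pow A"])
  have split: "{S. S \<subseteq> insert x A \<and> card S = Suc k} = ?subsets (Suc k) \<union> insert x ` ?subsets k"
  proof (intro equalityI subsetI)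
    fix S assume S: "S \<in> {S. S \<subseteq> insert x A \<and> card S = Suc k}"
    show "S \<in> ?subsets (Suc k) \<union> insert x ` ?subsets k"
    proof (cases "x \<in> S")
      case True
      then have "S = insert x (S - {x})" "S - {x} \<in> ?subsets k"
        using S assms by (auto simp: card_Diff_singleton_if)
      then show ?thesis by blast
    qed (use S in auto)
  next
    fix S assume "S \<in> ?subsets (Suc k) \<union> insert x ` ?subsets k"
    moreover have "card (insert x T) = Suc (card T)" if "T \<subseteq> A" for T
      using that assms by (meson card_insert_disjoint finite_subset subsetD)
    ultimately show "S \<in> {S. S \<subseteq> insert x A \<and> card S = Suc k}" by auto
  qed
  have inj: "inj_on (insert x) (?subsets k)"
    using assms(2) by (intro inj_onI) (metis insert_ident subsetD mem_Collect_eq)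
  have "elem_sym a (Suc k) (insert x A) =
      elem_sym a (Suc k) A + (\<Sum>S\<in>?subsets k. prod a (insert x S))"
    unfolding elem_sym_def split
    using assms(2) fin by (subst sum.union_disjoint) (auto simp: sum.reindex[OF inj])
  also have "(\<Sum>S\<in>?subsets k. prod a (insert x S)) = a x * elem_sym a k A"
    unfolding elem_sym_def sum_distrib_left
    using assms by (intro sum.cong refl) (metis mem_Collect_eq prod.insert finite_subset subsetD)
  finally show ?thesis .
qed

lemma power_Suc_add_ge_two_terms:
  fixes p b :: "'a::linordered_idom"
  assumes "0 \<le> p" and "0 \<le> b"
  shows "p ^ Suc m + of_nat (Suc m) * b * p ^ m \<le> (p + b) ^ Suc m"
proof (induction m)
  case (Suc m)
  have "p ^ Suc (Suc m) + of_nat (Suc (Suc m)) * b * p ^ Suc m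
      \<le> (p + b) * (p ^ Suc m + of_nat (Suc m) * b * p ^ m)"
    using assms by (simp add: algebra_simps)
  also have "\<dots> \<le> (p + b) * (p + b) ^ Suc m"
    using Suc assms by (intro mult_left_mono) auto
  finally show ?case by simp
qed simp

lemma fact_mult_elem_sym_le_power_sum:
  fixes a :: "'a \<Rightarrow> 'b::linordered_idom"
  assumes "finite A" and "\<And>x. x \<in> A \<Longrightarrow> 0 \<le> a x"
  shows "fact k * elem_sym a k A \<le> sum a A ^ k"
  using assms
proof (induction A arbitrary: k rule: finite_induct)
  case empty
  then show ?case by (cases k) (simp_all add: elem_sym_0 elem_sym_empty_Suc)
next
  case (insert x A)
  show ?case
  proof (cases k)
    case 0
    then show ?thesis using insert.hyps by (simp add: elem_sym_0)
  next
    case (Suc m)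
    have ax: "0 \<le> a x" and sum_nonneg: "0 \<le> sum a A"
      using insert.prems by (auto intro: sum_nonneg)
    have "fact k * elem_sym a k (insert x A)
        = fact k * elem_sym a k A + of_nat k * a x * (fact m * elem_sym a m A)"
      using Suc insert.hyps by (simp add: elem_sym_insert_Suc algebra_simps)
    also have "\<dots> \<le> sum a A ^ k + of_nat k * a x * sum a A ^ m"
      using insert.IH insert.prems ax by (intro add_mono mult_left_mono) auto
    also have "\<dots> \<le> (sum a A + a x) ^ k"
      using power_Suc_add_ge_two_terms[OF sum_nonneg ax, of m] Suc by (simp add: ac_simps)
    finally show ?thesis using insert.hyps by (simp add: add.commute)
  qed
qed

lemma bij_betw_set_strict_sorted_lists:
  fixes A :: "'a::linorder set"
  assumes "finite A"
  shows "bij_betw set {xs. length xs = k \<and> sorted_wrt (<) xs \<and> set xs \<subseteq> A}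
    {S. S \<subseteq> A \<and> card S = k}"
proof (rule bij_betwI')
  fix xs ys
  assume "xs \<in> {xs. length xs = k \<and> sorted_wrt (<) xs \<and> set xs \<subseteq> A}"
    and "ys \<in> {xs. length xs = k \<and> sorted_wrt (<) xs \<and> set xs \<subseteq> A}"
  then show "(set xs = set ys) = (xs = ys)"
    using strict_sorted_equal by auto
next
  fix xs assume "xs \<in> {xs. length xs = k \<and> sorted_wrt (<) xs \<and> set xs \<subseteq> A}"
  then show "set xs \<in> {S. S \<subseteq> A \<and> card S = k}"
    by (auto simp: strict_sorted_iff distinct_card)
next
  fix S assume S: "S \<in> {S. S \<subseteq> A \<and> card S = k}"
  then have "finite S" using assms finite_subset by auto
  then show "\<exists>xs\<in>{xs. length xs = k \<and> sorted_wrt (<) xs \<and> set xs \<subseteq> A}. S = set xs"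
    using S by (intro bexI[of _ "sorted_list_of_set S"]) auto
qed

lemma sum_strict_sorted_lists_eq_elem_sym:
  fixes A :: "'a::linorder set"
  assumes "finite A"
  shows "(\<Sum>xs | length xs = k \<and> sorted_wrt (<) xs \<and> set xs \<subseteq> A. prod a (set xs)) = elem_sym a k A"
  unfolding elem_sym_def
  by (rule sum.reindex_bij_betw[OF bij_betw_set_strict_sorted_lists[OF assms]])

lemma power_div_fact_less_exp:
  fixes x :: real
  assumes "0 < x"
  shows "x ^ n / fact n < exp x"
proof -
  have series: "(\<lambda>k. x ^ k / fact k) sums exp x"
    using exp_converges[of x] by (simp add: divide_inverse mult.commute)
  have "x ^ n / fact n \<le> (\<Sum>k<Suc n. x ^ k / fact k)"
    using assms by (intro member_le_sum) auto
  also have "\<dots> < exp x"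
    using sum_less_suminf[OF sums_summable[OF series], of "Suc n"] assms sums_unique[OF series]
    by simp
  finally show ?thesis .
qed

lemma sum_odd_reciprocals_le_ln:
  assumes "1 \<le> n"
  shows "(\<Sum>k<n. 1 / (2 * real k + 1)) \<le> 1 + ln (2 * real n - 1) / 2"
  using assms
proof (induction n rule: nat_induct_at_least)
  case (Suc n)
  have pos: "0 < 2 * real n - 1" using Suc by simp
  have "ln (2 * real n + 1) - ln (2 * real n - 1) = - ln ((2 * real n - 1) / (2 * real n + 1))"
    using pos by (simp add: ln_div)
  also have "\<dots> \<ge> 1 - (2 * real n - 1) / (2 * real n + 1)"
    using pos ln_le_minus_one[of "(2 * real n - 1) / (2 * real n + 1)"] by simp
  finally have "1 / (2 * real n + 1) \<le> ln (2 * real (Suc n) - 1) / 2 - ln (2 * real n - 1) / 2"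
    by (simp add: field_simps)
  then show ?case using Suc.IH by simp
qed simp

lemma odd_mhs_index_set:
  "{ks. length ks = length s \<and> sorted_wrt (<) ks \<and> (\<forall>k\<in>set ks. k < n)} =
   {ks. length ks = length s \<and> sorted_wrt (<) ks \<and> set ks \<subseteq> {..<n}}"
  by auto

lemma odd_mhs_pos:
  assumes "length s \<le> n"
  shows "0 < odd_mhs n s"
proof -
  have fin: "finite {ks. length ks = length s \<and> sorted_wrt (<) ks \<and> set ks \<subseteq> {..<n}}"
    by (rule finite_subset[OF _ finite_lists_length_eq[of "{..<n}" "length s"]]) auto
  have mem: "[0..<length s] \<in> {ks. length ks = length s \<and> sorted_wrt (<) ks \<and> set ks \<subseteq> {..<n}}"
    using assms by auto
  show ?thesis
    unfolding odd_mhs_def odd_mhs_index_set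
    by (rule sum_pos2[OF fin mem]) (auto intro!: prod_pos prod_nonneg)
qed

lemma odd_mhs_le_elem_sym:
  assumes "\<forall>x\<in>set s. 1 \<le> x"
  shows "odd_mhs n s \<le> elem_sym (\<lambda>k. 1 / (2 * real k + 1)) (length s) {..<n}"
proof -
  let ?a = "\<lambda>k. 1 / (2 * real k + 1)"
  have "odd_mhs n s \<le> (\<Sum>ks | length ks = length s \<and> sorted_wrt (<) ks \<and> set ks \<subseteq> {..<n}.
      \<Prod>j<length s. ?a (ks ! j))"
    unfolding odd_mhs_def odd_mhs_index_set
  proof (intro sum_mono prod_mono conjI)
    fix ks j assume "j \<in> {..<length s}"
    then have "1 \<le> s ! j" using assms by auto
    then have "2 * real (ks ! j) + 1 \<le> (2 * real (ks ! j) + 1) ^ (s ! j)"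
      using power_increasing[of 1 "s ! j" "2 * real (ks ! j) + 1"] by simp
    then show "1 / (2 * real (ks ! j) + 1) ^ (s ! j) \<le> ?a (ks ! j)"
      by (intro divide_left_mono) auto
  qed simp
  also have "\<dots> = (\<Sum>ks | length ks = length s \<and> sorted_wrt (<) ks \<and> set ks \<subseteq> {..<n}.
      prod ?a (set ks))"
    by (intro sum.cong refl)
      (auto simp: strict_sorted_iff prod.distinct_set_conv_list prod.list_conv_set_nth atLeast0LessThan)
  also have "\<dots> = elem_sym ?a (length s) {..<n}"
    by (rule sum_strict_sorted_lists_eq_elem_sym) simp
  finally show ?thesis .
qed

theorem lemma2p3:
  fixes r n :: nat and s :: "nat list"
  assumes "r \<ge> 1" and "n \<ge> 1"
    and "exp 1 * (1/2 * ln (2 * real n - 1) + 1) \<le> real r"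
    and "r \<le> n"
    and "length s = r" and "\<forall>x\<in>set s. x \<ge> 1"
  shows "odd_mhs n s \<notin> \<int>"
proof -
  define a where "a = (\<lambda>k::nat. 1 / (2 * real k + 1))"
  have "exp 1 * sum a {..<n} \<le> exp 1 * (1/2 * ln (2 * real n - 1) + 1)"
    using sum_odd_reciprocals_le_ln[OF assms(2)] by (simp add: a_def)
  then have "exp 1 * sum a {..<n} \<le> real r"
    using assms(3) by linarith
  then have sum_a_le: "sum a {..<n} \<le> real r / exp 1"
    by (simp add: field_simps)
  have "fact r * elem_sym a r {..<n} \<le> sum a {..<n} ^ r"
    by (rule fact_mult_elem_sym_le_power_sum) (auto simp: a_def)
  also have "\<dots> \<le> (real r / exp 1) ^ r"
    using sum_a_le by (intro power_mono) (auto simp: a_def intro: sum_nonneg)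
  also have "\<dots> = real r ^ r / exp (real r)"
    by (simp add: power_divide flip: exp_of_nat_mult)
  also have "\<dots> < fact r"
    using power_div_fact_less_exp[of "real r" r] assms(1) by (simp add: field_simps)
  finally have "elem_sym a r {..<n} < 1"
    by simp
  moreover have "odd_mhs n s \<le> elem_sym a r {..<n}"
    using odd_mhs_le_elem_sym[OF assms(6), of n] assms(5) by (simp add: a_def)
  moreover have "0 < odd_mhs n s"
    using odd_mhs_pos assms(4,5) by simp
  ultimately show ?thesis
    by (auto elim!: Ints_cases)
qed

end
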